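(* Let $H:\mathbb{R}_+\to[0,1]$ be a measurable function with $\|H\|_1:=\int_0^\infty H(x)\,dx<\infty$ and $\|H\|_2^2:=\int_0^\infty H(x)^2\,dx<\|H\|_1$. Fix $\tau>0$ and $\alpha>0$. For positive integers $L$ set $R_L=\ln(\tau L)/(2\|H\|_1)$. Let $\mathcal{P}_L$ be a Poisson point process of unit intensity on the torus $[0,L]$ (with $0$ and $L$ identified), with circular distance $\rho^L(x,y)=\min\{|x-y|,L-|x-y|\}$, and let $\tilde h^L(x,y)=H(\rho^L(x,y)/R_L)\mathbb{1}\{\rho^L(x,y)\le R_L^{1+1/\alpha}\}$. Let $\mathcal{G}_{\tilde h^L}(\mathcal{P}_L)$ be the random graph on vertex set $\mathcal{P}_L$ in which, conditionally on $\mathcal{P}_L$, each pair of distinct nodes $x,y$ is joined by an edge with probability $\tilde h^L(x,y)$, independently over pairs. For $m\in\mathbb{N}$, divide the torus into segments $A_i=[(i-1)/m,i/m)$, $i\in\Gamma=\{1,\dots,mL\}$, with centres $x_i$, and let $I_i$ be the indicator that $A_i$ contains exactly one node of $\mathcal{P}_L$ and that node is isolated in $\mathcal{G}_{\tilde h^L}(\mathcal{P}_L)$. Let $B_i=\{j\in\Gamma:\rho^L(x_i,x_j)\le 3R_L^{1+1/\alpha}\}$, $p_{ij}=\mathbb{E}[I_iI_j]$, and $b_2=\sum_{i\in\Gamma}\sum_{j\in B_i\setminus\{i\}}p_{ij}$ (which depends on $m$ and $L$). Then $b_2$ tends to zero as $m\to\infty$ followed by $L\to\infty$, i.e. $\lim_{L\to\infty}\limsup_{m\to\infty}b_2=0$.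 *)

theory Defs
  imports "HOL-Probability.Probability"
begin

definition rhoL :: "real \<Rightarrow> real \<Rightarrow> real \<Rightarrow> real" where
  "rhoL L x y = min \<bar>x - y\<bar> (L - \<bar>x - y\<bar>)"

definition norm1 :: "(real \<Rightarrow> real) \<Rightarrow> real" where
  "norm1 H = (LBINT x:{0..}. H x)"

definition norm2sq :: "(real \<Rightarrow> real) \<Rightarrow> real" where
  "norm2sq H = (LBINT x:{0..}. (H x)\<^sup>2)"

definition RL :: "(real \<Rightarrow> real) \<Rightarrow> real \<Rightarrow> nat \<Rightarrow> real" where
  "RL H \<tau> L = ln (\<tau> * real L) / (2 * norm1 H)"

definition htilde :: "(real \<Rightarrow> real) \<Rightarrow> real \<Rightarrow> real \<Rightarrow> nat \<Rightarrow> real \<Rightarrow> real \<Rightarrow> real" where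
  "htilde H \<tau> \<alpha> L x y =
     (if rhoL (real L) x y \<le> RL H \<tau> L powr (1 + 1 / \<alpha>)
      then H (rhoL (real L) x y / RL H \<tau> L) else 0)"

definition pairs :: "nat \<Rightarrow> (nat \<times> nat) set" where
  "pairs n = {(a, b). a < b \<and> b < n}"

definition edge_pmf ::
  "(real \<Rightarrow> real) \<Rightarrow> real \<Rightarrow> real \<Rightarrow> nat \<Rightarrow> nat \<Rightarrow> (nat \<Rightarrow> real) \<Rightarrow> (nat \<times> nat \<Rightarrow> bool) pmf" where
  "edge_pmf H \<tau> \<alpha> L n x =
     Pi_pmf (pairs n) False (\<lambda>(a, b). bernoulli_pmf (htilde H \<tau> \<alpha> L (x a) (x b)))"

definition adj :: "(nat \<times> nat \<Rightarrow> bool) \<Rightarrow> nat \<Rightarrow> nat \<Rightarrow> bool" where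
  "adj e k l = (if k < l then e (k, l) else e (l, k))"

definition seg :: "nat \<Rightarrow> nat \<Rightarrow> real set" where
  "seg m i = {(real i - 1) / real m ..< real i / real m}"

definition centre :: "nat \<Rightarrow> nat \<Rightarrow> real" where
  "centre m i = (real i - 1 / 2) / real m"

definition good :: "nat \<Rightarrow> nat \<Rightarrow> (nat \<Rightarrow> real) \<Rightarrow> (nat \<times> nat \<Rightarrow> bool) \<Rightarrow> nat \<Rightarrow> bool" where
  "good m n x e i =
     (\<exists>k<n. {l. l < n \<and> x l \<in> seg m i} = {k} \<and> (\<forall>l<n. l \<noteq> k \<longrightarrow> \<not> adj e k l))"

text \<open>The Poisson process of unit intensity on [0,L) is realised as
  N ~ Poisson(L) followed by N i.i.d. uniform points on [0,L); conditionally on the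
  points, edges are independent. The expectation is the corresponding mixture.\<close>
definition pij :: "(real \<Rightarrow> real) \<Rightarrow> real \<Rightarrow> real \<Rightarrow> nat \<Rightarrow> nat \<Rightarrow> nat \<Rightarrow> nat \<Rightarrow> real" where
  "pij H \<tau> \<alpha> m L i j =
     (\<Sum>n. pmf (poisson_pmf (real L)) n *
        (\<integral>x. measure_pmf.prob (edge_pmf H \<tau> \<alpha> L n x)
                 {e. good m n x e i \<and> good m n x e j}
           \<partial>(PiM {..<n} (\<lambda>_. uniform_measure lborel {0..<real L}))))"

definition Gamma :: "nat \<Rightarrow> nat \<Rightarrow> nat set" where
  "Gamma m L = {1 .. m * L}"

definition Bset :: "(real \<Rightarrow> real) \<Rightarrow> real \<Rightarrow> real \<Rightarrow> nat \<Rightarrow> nat \<Rightarrow> nat \<Rightarrow> nat set" where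
  "Bset H \<tau> \<alpha> m L i =
     {j \<in> Gamma m L. rhoL (real L) (centre m i) (centre m j) \<le> 3 * RL H \<tau> L powr (1 + 1 / \<alpha>)}"

definition b2 :: "(real \<Rightarrow> real) \<Rightarrow> real \<Rightarrow> real \<Rightarrow> nat \<Rightarrow> nat \<Rightarrow> real" where
  "b2 H \<tau> \<alpha> m L = (\<Sum>i\<in>Gamma m L. \<Sum>j\<in>Bset H \<tau> \<alpha> m L i - {i}. pij H \<tau> \<alpha> m L i j)"

end

theory Submission
  imports Defs "HOL-Real_Asymp.Real_Asymp"
begin

(* Conditionally on N = n uniform points, I_i I_j = 1 forces two distinct points x_k in A_i and
   x_l in A_j that are joined to none of the other n - 2 points; for fixed positions this has
   probability prod_z (1 - h(x_k, x_z)) (1 - h(x_l, x_z)).  The free points are independent, so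
   the configuration integral is at most n (n - 1) Q^(n-2) / (m L)^2, where Q bounds the average
   over t of (1 - h(a, t)) (1 - h(b, t)).  Writing g = h - h^2/2, the identity
   (1 - x) (1 - y) = 1 - g x - g y - (x - y)^2/2 and the fact that every point sees a full
   neighbourhood of radius R^(1+1/alpha) on the torus give Q <= 1 - 4 R Phi / L with
   Phi = int_0^(R^(1/alpha)) (H - H^2/2).  Averaging over N ~ Poisson(L) turns n (n - 1) Q^(n-2)
   into L^2 exp (- L (1 - Q)), whence p_ij <= exp (- 4 R Phi) / m^2.  As B_i has at most
   6 R^(1+1/alpha) m + 1 elements, b_2 <= L (6 R^(1+1/alpha) + 1) exp (- 4 R Phi).  Finally
   Phi tends to ||H||_1 - ||H||_2^2/2 > ||H||_1 / 2 and 2 R ||H||_1 = ln (tau L), so the bound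
   decays like a negative power of L times a power of ln L. *)

section \<open>Independent Bernoulli edges\<close>

lemma measure_Pi_pmf_Pi_subset:
  assumes "finite A" "S \<subseteq> A"
  shows "measure_pmf.prob (Pi_pmf A dflt p) {f. \<forall>a\<in>S. f a \<in> B a}
    = (\<Prod>a\<in>S. measure_pmf.prob (p a) (B a))"
proof -
  have "{f. \<forall>a\<in>S. f a \<in> B a} = Pi A (\<lambda>a. if a \<in> S then B a else UNIV)"
    using assms(2) by (auto simp: Pi_def)
  then have "measure_pmf.prob (Pi_pmf A dflt p) {f. \<forall>a\<in>S. f a \<in> B a}
      = (\<Prod>a\<in>A. measure_pmf.prob (p a) (if a \<in> S then B a else UNIV))"
    using assms(1) by (simp add: measure_Pi_pmf_Pi)
  also have "\<dots> = (\<Prod>a\<in>S. measure_pmf.prob (p a) (B a))"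
    using assms by (intro prod.mono_neutral_cong_right) auto
  finally show ?thesis .
qed

lemma adj_conv_min_max: "adj e k l = e (min k l, max k l)"
  by (simp add: adj_def min_def max_def)

definition pair_isolated :: "nat \<Rightarrow> nat \<Rightarrow> nat \<Rightarrow> (nat \<times> nat \<Rightarrow> bool) set" where
  "pair_isolated n k l = {e. \<forall>z\<in>{..<n} - {k, l}. \<not> adj e k z \<and> \<not> adj e l z}"

lemma prob_pair_isolated:
  fixes p :: "nat \<Rightarrow> nat \<Rightarrow> real"
  assumes sym: "\<And>a b. p a b = p b a" and kl: "k < n" "l < n" "k \<noteq> l"
  shows "measure_pmf.prob (Pi_pmf (pairs n) False (\<lambda>(a, b). bernoulli_pmf (p a b))) (pair_isolated n k l)
    = (\<Prod>z\<in>{..<n} - {k, l}. pmf (bernoulli_pmf (p k z)) False * pmf (bernoulli_pmf (p l z)) False)"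
proof -
  define Z where "Z = {..<n} - {k, l}"
  define edge where "edge a z = (min a z, max a z)" for a z :: nat
  let ?q = "\<lambda>(a, b). pmf (bernoulli_pmf (p a b)) False"
  have fin: "finite (pairs n)"
    by (rule finite_subset[of _ "{..<n} \<times> {..<n}"]) (auto simp: pairs_def)
  have inj: "inj_on (edge a) Z" for a
    by (auto simp: inj_on_def edge_def Z_def min_def max_def split: if_splits)
  have disj: "edge k ` Z \<inter> edge l ` Z = {}"
    using kl by (auto simp: edge_def Z_def min_def max_def split: if_splits)
  have sub: "edge k ` Z \<union> edge l ` Z \<subseteq> pairs n"
    using kl by (auto simp: edge_def Z_def pairs_def min_def max_def)
  have q_edge: "?q (edge a z) = pmf (bernoulli_pmf (p a z)) False" for a z
    by (auto simp: edge_def min_def max_def sym)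
  have "pair_isolated n k l = {e. \<forall>c\<in>edge k ` Z \<union> edge l ` Z. e c \<in> {False}}"
    by (auto simp: pair_isolated_def Z_def adj_conv_min_max edge_def)
  then have "measure_pmf.prob (Pi_pmf (pairs n) False (\<lambda>(a, b). bernoulli_pmf (p a b))) (pair_isolated n k l)
      = (\<Prod>c\<in>edge k ` Z \<union> edge l ` Z. measure_pmf.prob (case c of (a, b) \<Rightarrow> bernoulli_pmf (p a b)) {False})"
    by (simp only: measure_Pi_pmf_Pi_subset[OF fin sub])
  also have "\<dots> = (\<Prod>c\<in>edge k ` Z \<union> edge l ` Z. ?q c)"
    by (simp add: measure_pmf_single case_prod_beta)
  also have "\<dots> = (\<Prod>z\<in>Z. ?q (edge k z)) * (\<Prod>z\<in>Z. ?q (edge l z))"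
    using disj inj by (simp add: prod.union_disjoint prod.reindex Z_def)
  finally show ?thesis
    by (simp add: q_edge prod.distrib Z_def)
qed

lemma good_pair_subset:
  assumes disj: "seg m i \<inter> seg m j = {}"
  shows "{e. good m n x e i \<and> good m n x e j}
    \<subseteq> (\<Union>(k, l)\<in>{(k, l). k < n \<and> l < n \<and> k \<noteq> l \<and> x k \<in> seg m i \<and> x l \<in> seg m j}. pair_isolated n k l)"
proof
  fix e assume "e \<in> {e. good m n x e i \<and> good m n x e j}"
  then have "good m n x e i" "good m n x e j"
    by simp_all
  then obtain k l where
    k: "k < n" "{z. z < n \<and> x z \<in> seg m i} = {k}" "\<forall>z<n. z \<noteq> k \<longrightarrow> \<not> adj e k z" and
    l: "l < n" "{z. z < n \<and> x z \<in> seg m j} = {l}" "\<forall>z<n. z \<noteq> l \<longrightarrow> \<not> adj e l z"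
    unfolding good_def by blast
  moreover have "x k \<in> seg m i" "x l \<in> seg m j"
    using k(2) l(2) by blast+
  moreover have "k \<noteq> l"
    using \<open>x k \<in> seg m i\<close> \<open>x l \<in> seg m j\<close> disj by auto
  ultimately have "(k, l) \<in> {(k, l). k < n \<and> l < n \<and> k \<noteq> l \<and> x k \<in> seg m i \<and> x l \<in> seg m j}"
    and "e \<in> pair_isolated n k l"
    by (auto simp: pair_isolated_def)
  then show "e \<in> (\<Union>(k, l)\<in>{(k, l). k < n \<and> l < n \<and> k \<noteq> l \<and> x k \<in> seg m i \<and> x l \<in> seg m j}.
      pair_isolated n k l)"
    by blast
qed

section \<open>Independent uniform points and the Poisson mixture\<close>

lemma measurable_compose_triple:
  assumes "(\<lambda>(a, b, t). g a b t) \<in> borel_measurable (M \<Otimes>\<^sub>M M \<Otimes>\<^sub>M M)"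
    and [measurable]: "f1 \<in> N \<rightarrow>\<^sub>M M" "f2 \<in> N \<rightarrow>\<^sub>M M" "f3 \<in> N \<rightarrow>\<^sub>M M"
  shows "(\<lambda>x. g (f1 x) (f2 x) (f3 x)) \<in> borel_measurable N"
proof -
  have "(\<lambda>x. (f1 x, f2 x, f3 x)) \<in> N \<rightarrow>\<^sub>M M \<Otimes>\<^sub>M M \<Otimes>\<^sub>M M"
    by measurable
  from measurable_compose[OF this assms(1)] show ?thesis
    by simp
qed

lemma nn_integral_PiM_pair_prod_le:
  fixes g :: "'a \<Rightarrow> 'a \<Rightarrow> 'a \<Rightarrow> ennreal"
  assumes "prob_space M"
    and g_meas: "(\<lambda>(a, b, t). g a b t) \<in> borel_measurable (M \<Otimes>\<^sub>M M \<Otimes>\<^sub>M M)"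
    and kl: "k < n" "l < n" "k \<noteq> l"
    and AB[measurable]: "A \<in> sets M" "B \<in> sets M"
    and Q: "\<And>a b. a \<in> A \<Longrightarrow> b \<in> B \<Longrightarrow> (\<integral>\<^sup>+t. g a b t \<partial>M) \<le> Q"
  shows "(\<integral>\<^sup>+x. indicator A (x k) * indicator B (x l) * (\<Prod>z\<in>{..<n} - {k, l}. g (x k) (x l) (x z))
           \<partial>PiM {..<n} (\<lambda>_. M))
    \<le> emeasure M A * emeasure M B * Q ^ (n - 2)"
proof -
  interpret M: prob_space M by fact
  interpret P: product_sigma_finite "\<lambda>_. M"
    by (simp add: product_sigma_finite_def M.sigma_finite_measure_axioms)
  define I where "I = {k, l}"
  define J where "J = {..<n} - {k, l}"
  have IJ: "I \<inter> J = {}" "I \<union> J = {..<n}" and fin: "finite I" "finite J" and card_J: "card J = n - 2"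
    using kl by (auto simp: I_def J_def card_Diff_subset)
  have [measurable]: "(\<lambda>t. g a b t) \<in> borel_measurable M" if "a \<in> space M" "b \<in> space M" for a b
    using that by (intro measurable_compose_triple[OF g_meas]) auto
  let ?f = "\<lambda>x. indicator A (x k) * indicator B (x l) * (\<Prod>z\<in>J. g (x k) (x l) (x z))"
  have "(\<lambda>x. g (x k) (x l) (x z)) \<in> borel_measurable (PiM (I \<union> J) (\<lambda>_. M))" if "z \<in> J" for z
    using that by (intro measurable_compose_triple[OF g_meas]) (auto simp: I_def)
  then have f_meas: "?f \<in> borel_measurable (PiM (I \<union> J) (\<lambda>_. M))"
    by (intro borel_measurable_times_ennreal borel_measurable_prod_ennreal) (measurable, auto simp: I_def)
  have inner: "(\<integral>\<^sup>+y. ?f (merge I J (x, y)) \<partial>PiM J (\<lambda>_. M))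
      \<le> indicator A (x k) * indicator B (x l) * Q ^ (n - 2)" if "x \<in> space (PiM I (\<lambda>_. M))" for x
  proof -
    have xkl: "x k \<in> space M" "x l \<in> space M"
      using that by (auto simp: I_def space_PiM)
    have "(\<integral>\<^sup>+y. ?f (merge I J (x, y)) \<partial>PiM J (\<lambda>_. M))
        = indicator A (x k) * indicator B (x l) * (\<integral>\<^sup>+y. (\<Prod>z\<in>J. g (x k) (x l) (y z)) \<partial>PiM J (\<lambda>_. M))"
      using xkl by (subst nn_integral_cmult[symmetric])
        (auto intro!: nn_integral_cong prod.cong simp: merge_def I_def J_def)
    also have "\<dots> = indicator A (x k) * indicator B (x l) * (\<Prod>z\<in>J. \<integral>\<^sup>+t. g (x k) (x l) t \<partial>M)"
      using fin xkl by (subst P.product_nn_integral_prod) auto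
    also have "\<dots> \<le> indicator A (x k) * indicator B (x l) * Q ^ (n - 2)"
      using Q by (auto simp: indicator_def card_J[symmetric] intro!: power_mono)
    finally show ?thesis .
  qed
  have "(\<integral>\<^sup>+x. ?f x \<partial>PiM {..<n} (\<lambda>_. M))
      = (\<integral>\<^sup>+x. (\<integral>\<^sup>+y. ?f (merge I J (x, y)) \<partial>PiM J (\<lambda>_. M)) \<partial>PiM I (\<lambda>_. M))"
    unfolding IJ(2)[symmetric] using IJ(1) fin f_meas by (intro P.product_nn_integral_fold)
  also have "\<dots> \<le> (\<integral>\<^sup>+x. indicator A (x k) * indicator B (x l) * Q ^ (n - 2) \<partial>PiM I (\<lambda>_. M))"
    by (intro nn_integral_mono inner)
  also have "\<dots> = (\<integral>\<^sup>+x. (\<Prod>z\<in>I. indicator (if z = k then A else B) (x z)) \<partial>PiM I (\<lambda>_. M)) * Q ^ (n - 2)"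
    using kl by (subst nn_integral_multc[symmetric]) (auto simp: I_def intro!: nn_integral_cong)
  also have "\<dots> = emeasure M A * emeasure M B * Q ^ (n - 2)"
    using kl fin by (subst P.product_nn_integral_prod) (auto simp: I_def)
  finally show ?thesis
    by (simp add: J_def)
qed

lemma poisson_pmf_factorial_moment_sums:
  fixes \<mu> q :: real
  assumes "0 < \<mu>"
  shows "(\<lambda>n. pmf (poisson_pmf \<mu>) n * (real n * (real n - 1) * q ^ (n - 2)))
    sums (\<mu>\<^sup>2 * exp (\<mu> * (q - 1)))"
proof -
  let ?a = "\<lambda>n. pmf (poisson_pmf \<mu>) n * (real n * (real n - 1) * q ^ (n - 2))"
  have shift: "?a (k + 2) = \<mu>\<^sup>2 * exp (- \<mu>) * ((\<mu> * q) ^ k /\<^sub>R fact k)" for k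
  proof -
    define c where "c = real (k + 2) * (real (k + 2) - 1)"
    have c: "(fact (k + 2) :: real) = c * fact k" "c \<noteq> 0"
      by (simp add: c_def algebra_simps) (simp add: c_def)
    have "?a (k + 2) = \<mu> ^ (k + 2) / (c * fact k) * exp (- \<mu>) * (c * q ^ k)"
      using assms by (simp only: pmf_poisson c(1) flip: c_def) simp
    also have "\<dots> = \<mu>\<^sup>2 * exp (- \<mu>) * ((\<mu> * q) ^ k /\<^sub>R fact k)"
      using c(2) by (simp add: power_add power2_eq_square field_simps)
    finally show ?thesis .
  qed
  have limit: "\<mu>\<^sup>2 * exp (\<mu> * (q - 1)) = \<mu>\<^sup>2 * exp (- \<mu>) * exp (\<mu> * q)"
    by (simp add: mult_exp_exp algebra_simps)
  have "(\<lambda>k. ?a (k + 2)) sums (\<mu>\<^sup>2 * exp (\<mu> * (q - 1)))"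
    unfolding shift limit by (intro sums_mult exp_converges)
  then show ?thesis
    by (subst (asm) sums_zero_iff_shift) (auto simp: less_2_cases_iff)
qed

section \<open>Integrals on the line and on the torus\<close>

lemma sub_half_sq_nonneg: "0 \<le> x \<Longrightarrow> x \<le> 1 \<Longrightarrow> 0 \<le> x - (x::real)\<^sup>2 / 2"
  using mult_left_le_one_le[of x x] by (simp add: power2_eq_square)

lemma borel_measurable_rhoL[measurable]:
  assumes [measurable]: "f \<in> borel_measurable M" "g \<in> borel_measurable M"
  shows "(\<lambda>x. rhoL L (f x) (g x)) \<in> borel_measurable M"
  unfolding rhoL_def by measurable

lemma nn_integral_lborel_Ico_shift:
  fixes g :: "real \<Rightarrow> ennreal"
  assumes [measurable]: "g \<in> borel_measurable borel"
  shows "(\<integral>\<^sup>+x\<in>{a..<b}. g x \<partial>lborel) = (\<integral>\<^sup>+x\<in>{a - c..<b - c}. g (c + x) \<partial>lborel)"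
  using nn_integral_real_affine[of "\<lambda>x. g x * indicator {a..<b} x" 1 c]
  by (simp add: indicator_def algebra_simps)

lemma nn_integral_lborel_Ioo_reflect:
  fixes g :: "real \<Rightarrow> ennreal"
  assumes [measurable]: "g \<in> borel_measurable borel"
  shows "(\<integral>\<^sup>+x\<in>{a<..<b}. g x \<partial>lborel) = (\<integral>\<^sup>+x\<in>{c - b<..<c - a}. g (c - x) \<partial>lborel)"
  using nn_integral_real_affine[of "\<lambda>x. g x * indicator {a<..<b} x" "-1" c]
  by (simp add: indicator_def algebra_simps conj_commute)

lemma nn_integral_lborel_Ioo_scale:
  fixes g :: "real \<Rightarrow> ennreal"
  assumes [measurable]: "g \<in> borel_measurable borel" and c: "0 < c"
  shows "(\<integral>\<^sup>+d\<in>{0<..<c * M}. g (d / c) \<partial>lborel) = c * (\<integral>\<^sup>+s\<in>{0<..<M}. g s \<partial>lborel)"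
  using nn_integral_real_affine[of "\<lambda>d. g (d / c) * indicator {0<..<c * M} d" c 0] c
  by (simp add: indicator_def zero_less_mult_iff)

lemma set_integrable_power2_of_unit_range:
  fixes f :: "'a \<Rightarrow> real"
  assumes f: "set_integrable M A f" and range: "\<And>x. x \<in> A \<Longrightarrow> 0 \<le> f x \<and> f x \<le> 1"
  shows "set_integrable M A (\<lambda>x. (f x)\<^sup>2)"
proof (rule set_integrable_bound[OF f])
  have "(\<lambda>x. indicator A x *\<^sub>R f x) \<in> borel_measurable M"
    using f by (simp add: set_integrable_def)
  then have "(\<lambda>x. (indicator A x *\<^sub>R f x)\<^sup>2) \<in> borel_measurable M"
    by measurable
  then show "set_borel_measurable M A (\<lambda>x. (f x)\<^sup>2)"
    unfolding set_borel_measurable_def by (rule measurable_cong[THEN iffD1, rotated]) (simp add: indicator_def)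
  show "AE x in M. x \<in> A \<longrightarrow> norm ((f x)\<^sup>2) \<le> norm (f x)"
    using range by (auto simp: power2_eq_square mult_left_le_one_le)
qed

lemma set_nn_integral_eq_set_integral_nonneg:
  fixes f :: "'a \<Rightarrow> real"
  assumes "set_integrable M A f" "\<And>x. x \<in> A \<Longrightarrow> 0 \<le> f x"
  shows "(\<integral>\<^sup>+x\<in>A. ennreal (f x) \<partial>M) = ennreal (LINT x:A|M. f x)"
proof -
  have "(\<integral>\<^sup>+x\<in>A. ennreal (f x) \<partial>M) = (\<integral>\<^sup>+x. ennreal (indicator A x *\<^sub>R f x) \<partial>M)"
    by (intro nn_integral_cong) (simp add: indicator_def)
  also have "\<dots> = ennreal (LINT x:A|M. f x)"
    unfolding set_lebesgue_integral_def using assms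
    by (intro nn_integral_eq_integral) (auto simp: set_integrable_def indicator_def)
  finally show ?thesis .
qed

lemma nn_integral_rhoL_translate:
  fixes f :: "real \<Rightarrow> ennreal"
  assumes [measurable]: "f \<in> borel_measurable borel" and a: "0 \<le> a" "a < L"
  shows "(\<integral>\<^sup>+t\<in>{0..<L}. f (rhoL L a t) \<partial>lborel) = (\<integral>\<^sup>+t\<in>{0..<L}. f (rhoL L 0 t) \<partial>lborel)"
proof -
  have "(\<integral>\<^sup>+t\<in>{0..<L}. f (rhoL L a t) \<partial>lborel)
      = (\<integral>\<^sup>+t\<in>{0..<a}. f (rhoL L a t) \<partial>lborel) + (\<integral>\<^sup>+t\<in>{a..<L}. f (rhoL L a t) \<partial>lborel)"
    using a by (subst nn_integral_disjoint_pair[symmetric]) (auto simp: ivl_disj_un)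
  also have "(\<integral>\<^sup>+t\<in>{0..<a}. f (rhoL L a t) \<partial>lborel) = (\<integral>\<^sup>+d\<in>{L - a..<L}. f (rhoL L 0 d) \<partial>lborel)"
    using a by (subst nn_integral_lborel_Ico_shift[where c = "a - L"])
      (auto intro!: set_nn_integral_cong simp: rhoL_def abs_if min.commute)
  also have "(\<integral>\<^sup>+t\<in>{a..<L}. f (rhoL L a t) \<partial>lborel) = (\<integral>\<^sup>+d\<in>{0..<L - a}. f (rhoL L 0 d) \<partial>lborel)"
    by (subst nn_integral_lborel_Ico_shift[where c = a]) (auto intro!: set_nn_integral_cong simp: rhoL_def)
  also have "(\<integral>\<^sup>+d\<in>{L - a..<L}. f (rhoL L 0 d) \<partial>lborel) + (\<integral>\<^sup>+d\<in>{0..<L - a}. f (rhoL L 0 d) \<partial>lborel)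
      = (\<integral>\<^sup>+t\<in>{0..<L}. f (rhoL L 0 t) \<partial>lborel)"
    using a by (subst add.commute, subst nn_integral_disjoint_pair[symmetric]) (auto simp: ivl_disj_un)
  finally show ?thesis .
qed

lemma nn_integral_rhoL_ge:
  fixes f :: "real \<Rightarrow> ennreal"
  assumes [measurable]: "f \<in> borel_measurable borel"
    and a: "0 \<le> a" "a < L" and T: "0 \<le> T" "2 * T \<le> L"
  shows "2 * (\<integral>\<^sup>+d\<in>{0<..<T}. f d \<partial>lborel) \<le> (\<integral>\<^sup>+t\<in>{0..<L}. f (rhoL L a t) \<partial>lborel)"
proof -
  have "(\<integral>\<^sup>+t\<in>{0<..<T}. f (rhoL L 0 t) \<partial>lborel) = (\<integral>\<^sup>+d\<in>{0<..<T}. f d \<partial>lborel)"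
    using T by (auto intro!: set_nn_integral_cong simp: rhoL_def)
  moreover have "(\<integral>\<^sup>+t\<in>{L - T<..<L}. f (rhoL L 0 t) \<partial>lborel) = (\<integral>\<^sup>+d\<in>{0<..<T}. f d \<partial>lborel)"
    using T by (subst nn_integral_lborel_Ioo_reflect[where c = L]) (auto intro!: set_nn_integral_cong simp: rhoL_def)
  ultimately have "2 * (\<integral>\<^sup>+d\<in>{0<..<T}. f d \<partial>lborel)
      = (\<integral>\<^sup>+t\<in>{0<..<T}. f (rhoL L 0 t) \<partial>lborel) + (\<integral>\<^sup>+t\<in>{L - T<..<L}. f (rhoL L 0 t) \<partial>lborel)"
    by (simp add: mult_2)
  also have "\<dots> = (\<integral>\<^sup>+t\<in>{0<..<T} \<union> {L - T<..<L}. f (rhoL L 0 t) \<partial>lborel)"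
    using T by (intro nn_integral_disjoint_pair[symmetric]) auto
  also have "\<dots> \<le> (\<integral>\<^sup>+t\<in>{0..<L}. f (rhoL L 0 t) \<partial>lborel)"
    using T by (intro nn_set_integral_set_mono) auto
  also have "\<dots> = (\<integral>\<^sup>+t\<in>{0..<L}. f (rhoL L a t) \<partial>lborel)"
    using a by (intro nn_integral_rhoL_translate[symmetric]) auto
  finally show ?thesis .
qed

lemma nn_integral_nonadj_pair_le:
  fixes h :: "real \<Rightarrow> real"
  assumes [measurable]: "h \<in> borel_measurable borel" and h: "\<And>r. 0 \<le> h r \<and> h r \<le> 1"
    and T: "0 \<le> T" "2 * T \<le> L" and a: "a \<in> {0..<L}" and b: "b \<in> {0..<L}"
  shows "(\<integral>\<^sup>+t\<in>{0..<L}. ennreal ((1 - h (rhoL L a t)) * (1 - h (rhoL L b t))) \<partial>lborel)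
      + 4 * (\<integral>\<^sup>+d\<in>{0<..<T}. ennreal (h d - (h d)\<^sup>2 / 2) \<partial>lborel) \<le> ennreal L"
proof -
  define g where "g r = h r - (h r)\<^sup>2 / 2" for r
  have g_nonneg: "0 \<le> g r" for r
    unfolding g_def using h[of r] by (intro sub_half_sq_nonneg) auto
  have [measurable]: "g \<in> borel_measurable borel"
    unfolding g_def by measurable
  let ?p = "\<lambda>t. (1 - h (rhoL L a t)) * (1 - h (rhoL L b t))"
  have sum_le_1: "?p t + g (rhoL L a t) + g (rhoL L b t) \<le> 1" for t
  proof -
    have "?p t + g (rhoL L a t) + g (rhoL L b t) = 1 - (h (rhoL L a t) - h (rhoL L b t))\<^sup>2 / 2"
      by (simp add: g_def power2_eq_square field_simps)
    then show ?thesis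
      by simp
  qed
  have "4 * (\<integral>\<^sup>+d\<in>{0<..<T}. ennreal (g d) \<partial>lborel)
      = 2 * (\<integral>\<^sup>+d\<in>{0<..<T}. ennreal (g d) \<partial>lborel) + 2 * (\<integral>\<^sup>+d\<in>{0<..<T}. ennreal (g d) \<partial>lborel)"
    by (simp flip: distrib_right)
  also have "\<dots> \<le> (\<integral>\<^sup>+t\<in>{0..<L}. ennreal (g (rhoL L a t)) \<partial>lborel)
      + (\<integral>\<^sup>+t\<in>{0..<L}. ennreal (g (rhoL L b t)) \<partial>lborel)"
    using a b T by (intro add_mono nn_integral_rhoL_ge) auto
  finally have "(\<integral>\<^sup>+t\<in>{0..<L}. ennreal (?p t) \<partial>lborel) + 4 * (\<integral>\<^sup>+d\<in>{0<..<T}. ennreal (g d) \<partial>lborel)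
      \<le> (\<integral>\<^sup>+t\<in>{0..<L}. ennreal (?p t) \<partial>lborel) + (\<integral>\<^sup>+t\<in>{0..<L}. ennreal (g (rhoL L a t)) \<partial>lborel)
        + (\<integral>\<^sup>+t\<in>{0..<L}. ennreal (g (rhoL L b t)) \<partial>lborel)"
    by (simp add: add.assoc add_left_mono)
  also have "\<dots> = (\<integral>\<^sup>+t\<in>{0..<L}. ennreal (?p t) + ennreal (g (rhoL L a t)) + ennreal (g (rhoL L b t)) \<partial>lborel)"
    by (simp add: nn_integral_add distrib_right)
  also have "\<dots> = (\<integral>\<^sup>+t\<in>{0..<L}. ennreal (?p t + g (rhoL L a t) + g (rhoL L b t)) \<partial>lborel)"
    using h g_nonneg by (intro set_nn_integral_cong) auto
  also have "\<dots> \<le> (\<integral>\<^sup>+t\<in>{0..<L}. 1 \<partial>lborel)"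
    using sum_le_1 by (intro nn_integral_mono) (auto simp: indicator_def)
  also have "\<dots> = ennreal L"
    using a by simp
  finally show ?thesis
    by (simp add: g_def)
qed

section \<open>The connection function\<close>

definition pair_isolation_integral :: "(real \<Rightarrow> real) \<Rightarrow> real \<Rightarrow> real" where
  "pair_isolation_integral H M = (LBINT s:{0..M}. H s - (H s)\<^sup>2 / 2)"

lemma pair_isolation_integral_nonneg:
  assumes "\<And>x. x \<ge> 0 \<Longrightarrow> 0 \<le> H x \<and> H x \<le> 1"
  shows "0 \<le> pair_isolation_integral H M"
  unfolding pair_isolation_integral_def set_lebesgue_integral_def
  by (intro integral_nonneg_AE AE_I2) (use assms sub_half_sq_nonneg in \<open>simp add: indicator_def\<close>)

lemma set_integral_sub_half_sq:
  assumes range: "\<And>x. x \<ge> 0 \<Longrightarrow> 0 \<le> H x \<and> H x \<le> 1" and int1: "set_integrable lborel {0..} H"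
  shows "set_integrable lborel {0..} (\<lambda>s. H s - (H s)\<^sup>2 / 2)"
    and "(LBINT s:{0..}. H s - (H s)\<^sup>2 / 2) = norm1 H - norm2sq H / 2"
proof -
  have int2: "set_integrable lborel {0..} (\<lambda>s. (H s)\<^sup>2 / 2)"
    using range by (intro set_integrable_divide set_integrable_power2_of_unit_range[OF int1]) auto
  show "set_integrable lborel {0..} (\<lambda>s. H s - (H s)\<^sup>2 / 2)"
    using int1 int2 by (rule set_integral_diff)
  show "(LBINT s:{0..}. H s - (H s)\<^sup>2 / 2) = norm1 H - norm2sq H / 2"
    using int1 int2 by (simp add: norm1_def norm2sq_def)
qed

lemma pair_isolation_integral_tendsto:
  assumes "\<And>x. x \<ge> 0 \<Longrightarrow> 0 \<le> H x \<and> H x \<le> 1" and "set_integrable lborel {0..} H"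
  shows "(pair_isolation_integral H \<longlongrightarrow> norm1 H - norm2sq H / 2) at_top"
proof -
  have "((\<lambda>M. LBINT s:{0..M}. H s - (H s)\<^sup>2 / 2) \<longlongrightarrow> (LBINT s:{0..}. H s - (H s)\<^sup>2 / 2)) at_top"
    using set_integral_sub_half_sq(1)[OF assms] by (intro tendsto_set_lebesgue_integral_at_top) auto
  then show ?thesis
    by (simp only: pair_isolation_integral_def[abs_def] set_integral_sub_half_sq(2)[OF assms])
qed

abbreviation cutoff :: "(real \<Rightarrow> real) \<Rightarrow> real \<Rightarrow> real \<Rightarrow> nat \<Rightarrow> real" where
  "cutoff H \<tau> \<alpha> L \<equiv> RL H \<tau> L powr (1 + 1 / \<alpha>)"

(* H is only controlled on [0, oo), so it is extended by 0
   to negative arguments; this makes conn measurable and [0, 1]-valued everywhere, and it agrees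
   with htilde whenever the distance is nonnegative, in particular on the torus. *)
definition conn :: "(real \<Rightarrow> real) \<Rightarrow> real \<Rightarrow> real \<Rightarrow> nat \<Rightarrow> real \<Rightarrow> real" where
  "conn H \<tau> \<alpha> L r =
     (if r \<le> cutoff H \<tau> \<alpha> L then indicator {0..} (r / RL H \<tau> L) * H (r / RL H \<tau> L) else 0)"

definition nonadj_both :: "(real \<Rightarrow> real) \<Rightarrow> real \<Rightarrow> real \<Rightarrow> nat \<Rightarrow> real \<Rightarrow> real \<Rightarrow> real \<Rightarrow> real" where
  "nonadj_both H \<tau> \<alpha> L a b t =
     (1 - conn H \<tau> \<alpha> L (rhoL (real L) a t)) * (1 - conn H \<tau> \<alpha> L (rhoL (real L) b t))"

lemma conn_range:
  assumes "\<And>x. x \<ge> 0 \<Longrightarrow> 0 \<le> H x \<and> H x \<le> 1"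
  shows "0 \<le> conn H \<tau> \<alpha> L r \<and> conn H \<tau> \<alpha> L r \<le> 1"
  using assms[of "r / RL H \<tau> L"] by (auto simp: conn_def indicator_def)

lemma nonadj_both_nonneg:
  assumes "\<And>x. x \<ge> 0 \<Longrightarrow> 0 \<le> H x \<and> H x \<le> 1"
  shows "0 \<le> nonadj_both H \<tau> \<alpha> L a b t"
  using conn_range[OF assms] by (simp add: nonadj_both_def)

lemma borel_measurable_conn[measurable]:
  assumes "set_borel_measurable lborel {0..} H"
  shows "conn H \<tau> \<alpha> L \<in> borel_measurable borel"
proof -
  have [measurable]: "(\<lambda>s. indicator {0..} s * H s) \<in> borel_measurable borel"
    using assms by (simp add: set_borel_measurable_def)
  show ?thesis
    unfolding conn_def by measurable
qed

lemma borel_measurable_nonadj_both[measurable]: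
  assumes "set_borel_measurable lborel {0..} H"
    and [measurable]: "f \<in> borel_measurable M" "g \<in> borel_measurable M" "h \<in> borel_measurable M"
  shows "(\<lambda>x. nonadj_both H \<tau> \<alpha> L (f x) (g x) (h x)) \<in> borel_measurable M"
  using borel_measurable_conn[OF assms(1)] unfolding nonadj_both_def by measurable

lemma htilde_commute: "htilde H \<tau> \<alpha> L x y = htilde H \<tau> \<alpha> L y x"
  by (simp add: htilde_def rhoL_def abs_minus_commute)

lemma pmf_bernoulli_htilde_False_le:
  assumes range: "\<And>x. x \<ge> 0 \<Longrightarrow> 0 \<le> H x \<and> H x \<le> 1" and R: "0 < RL H \<tau> L"
  shows "pmf (bernoulli_pmf (htilde H \<tau> \<alpha> L x y)) False \<le> 1 - conn H \<tau> \<alpha> L (rhoL (real L) x y)"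
proof (cases "0 \<le> rhoL (real L) x y")
  case True
  then have "htilde H \<tau> \<alpha> L x y = conn H \<tau> \<alpha> L (rhoL (real L) x y)"
    using R by (simp add: htilde_def conn_def)
  then show ?thesis
    using conn_range[OF range] by simp
next
  case False
  then have "conn H \<tau> \<alpha> L (rhoL (real L) x y) = 0"
    using R by (simp add: conn_def indicator_def zero_le_divide_iff)
  then show ?thesis
    by (simp add: pmf_le_1)
qed

lemma nn_integral_conn_gain:
  assumes meas: "set_borel_measurable lborel {0..} H"
    and range: "\<And>x. x \<ge> 0 \<Longrightarrow> 0 \<le> H x \<and> H x \<le> 1"
    and int1: "set_integrable lborel {0..} H" and R: "0 < RL H \<tau> L"
  shows "(\<integral>\<^sup>+d\<in>{0<..<cutoff H \<tau> \<alpha> L}. ennreal (conn H \<tau> \<alpha> L d - (conn H \<tau> \<alpha> L d)\<^sup>2 / 2) \<partial>lborel)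
    = ennreal (RL H \<tau> L * pair_isolation_integral H (cutoff H \<tau> \<alpha> L / RL H \<tau> L))"
proof -
  define R where "R = RL H \<tau> L"
  define M where "M = cutoff H \<tau> \<alpha> L / R"
  define f where "f s = indicator {0..} s * H s" for s
  have [measurable]: "f \<in> borel_measurable borel"
    using meas by (simp add: f_def[abs_def] set_borel_measurable_def)
  have "(\<integral>\<^sup>+d\<in>{0<..<cutoff H \<tau> \<alpha> L}. ennreal (conn H \<tau> \<alpha> L d - (conn H \<tau> \<alpha> L d)\<^sup>2 / 2) \<partial>lborel)
      = (\<integral>\<^sup>+d\<in>{0<..<R * M}. ennreal (f (d / R) - (f (d / R))\<^sup>2 / 2) \<partial>lborel)"
    using R by (intro set_nn_integral_cong) (auto simp: M_def R_def conn_def f_def)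
  also have "\<dots> = R * (\<integral>\<^sup>+s\<in>{0<..<M}. ennreal (f s - (f s)\<^sup>2 / 2) \<partial>lborel)"
    using R by (intro nn_integral_lborel_Ioo_scale) (auto simp: R_def)
  also have "(\<integral>\<^sup>+s\<in>{0<..<M}. ennreal (f s - (f s)\<^sup>2 / 2) \<partial>lborel)
      = (\<integral>\<^sup>+s\<in>{0<..<M}. ennreal (H s - (H s)\<^sup>2 / 2) \<partial>lborel)"
    by (intro set_nn_integral_cong) (auto simp: f_def)
  also have "\<dots> = (\<integral>\<^sup>+s\<in>{0..M}. ennreal (H s - (H s)\<^sup>2 / 2) \<partial>lborel)"
  proof (rule nn_integral_null_delta)
    show "({0<..<M} - {0..M}) \<union> ({0..M} - {0<..<M}) \<in> null_sets lborel"
      by (rule finite_imp_null_set_lborel, rule finite_subset[of _ "{0, M}"]) auto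
  qed auto
  also have "\<dots> = ennreal (pair_isolation_integral H M)"
    unfolding pair_isolation_integral_def using range
    by (intro set_nn_integral_eq_set_integral_nonneg sub_half_sq_nonneg
        set_integrable_subset[OF set_integral_sub_half_sq(1)[OF range int1]]) auto
  finally show ?thesis
    using R pair_isolation_integral_nonneg[OF range] by (simp add: R_def M_def ennreal_mult)
qed

lemma nn_integral_nonadj_both_le:
  assumes meas: "set_borel_measurable lborel {0..} H"
    and range: "\<And>x. x \<ge> 0 \<Longrightarrow> 0 \<le> H x \<and> H x \<le> 1"
    and int1: "set_integrable lborel {0..} H"
    and L: "0 < L" and R: "0 < RL H \<tau> L" and T: "2 * cutoff H \<tau> \<alpha> L \<le> real L"
    and a: "a \<in> {0..<real L}" and b: "b \<in> {0..<real L}"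
  defines "Q \<equiv> 1 - 4 * RL H \<tau> L * pair_isolation_integral H (cutoff H \<tau> \<alpha> L / RL H \<tau> L) / real L"
  shows "(\<integral>\<^sup>+t. ennreal (nonadj_both H \<tau> \<alpha> L a b t) \<partial>uniform_measure lborel {0..<real L}) \<le> ennreal Q"
    and "0 \<le> Q"
proof -
  define c where "c = 4 * (RL H \<tau> L * pair_isolation_integral H (cutoff H \<tau> \<alpha> L / RL H \<tau> L))"
  define X where "X = (\<integral>\<^sup>+t\<in>{0..<real L}. ennreal (nonadj_both H \<tau> \<alpha> L a b t) \<partial>lborel)"
  have c: "0 \<le> c"
    using R pair_isolation_integral_nonneg[OF range] by (simp add: c_def)
  have "X + 4 * (\<integral>\<^sup>+d\<in>{0<..<cutoff H \<tau> \<alpha> L}. ennreal (conn H \<tau> \<alpha> L d - (conn H \<tau> \<alpha> L d)\<^sup>2 / 2) \<partial>lborel)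
      \<le> ennreal (real L)"
    unfolding X_def nonadj_both_def using T a b conn_range[OF range]
    by (intro nn_integral_nonadj_pair_le borel_measurable_conn[OF meas]) auto
  moreover have "4 * (\<integral>\<^sup>+d\<in>{0<..<cutoff H \<tau> \<alpha> L}. ennreal (conn H \<tau> \<alpha> L d - (conn H \<tau> \<alpha> L d)\<^sup>2 / 2) \<partial>lborel)
      = ennreal c"
    using nn_integral_conn_gain[OF meas range int1 R] by (simp add: c_def ennreal_mult')
  ultimately have sum_le: "X + ennreal c \<le> ennreal (real L)"
    by simp
  then have "ennreal c \<le> ennreal (real L)"
    by (rule order_trans[OF add_increasing[OF zero_le order_refl]])
  then have "c \<le> real L"
    by simp
  then show "0 \<le> Q"
    using L by (simp add: Q_def c_def field_simps)
  have "(\<integral>\<^sup>+t. ennreal (nonadj_both H \<tau> \<alpha> L a b t) \<partial>uniform_measure lborel {0..<real L}) = X / ennreal (real L)"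
    using meas by (simp add: X_def nn_integral_uniform_measure)
  also have "\<dots> \<le> ennreal (real L - c) / ennreal (real L)"
    using sum_le c by (intro divide_right_mono_ennreal) (simp add: ennreal_le_minus_iff flip: ennreal_minus)
  also have "\<dots> = ennreal Q"
    using L \<open>c \<le> real L\<close> by (simp add: divide_ennreal Q_def c_def diff_divide_distrib)
  finally show "(\<integral>\<^sup>+t. ennreal (nonadj_both H \<tau> \<alpha> L a b t) \<partial>uniform_measure lborel {0..<real L}) \<le> ennreal Q" .
qed

section \<open>The pair probabilities\<close>

lemma seg_subset: "0 < m \<Longrightarrow> i \<in> Gamma m L \<Longrightarrow> seg m i \<subseteq> {0..<real L}"
  by (auto simp: seg_def Gamma_def field_simps simp flip: of_nat_mult intro: order.strict_trans2)

lemma seg_disjoint: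
  assumes "i \<noteq> j"
  shows "seg m i \<inter> seg m j = {}"
proof (cases "m = 0")
  case False
  have "real i < real j + 1" "real j < real i + 1" if "x \<in> seg m i" "x \<in> seg m j" for x
    using that False by (auto simp: seg_def field_simps)
  then show ?thesis
    using assms by fastforce
qed (simp add: seg_def)

lemma emeasure_uniform_seg:
  assumes "0 < m" "0 < L" "i \<in> Gamma m L"
  shows "emeasure (uniform_measure lborel {0..<real L}) (seg m i) = ennreal (1 / (real m * real L))"
  using seg_subset[OF assms(1,3)] assms(1,2)
  by (simp add: seg_def Int_absorb1 divide_ennreal diff_divide_distrib)

lemma card_offdiag: "card {(k, l). k < n \<and> l < n \<and> k \<noteq> (l::nat)} = n * (n - 1)"
proof -
  have "{(k, l). k < n \<and> l < n \<and> k \<noteq> (l::nat)} = Sigma {..<n} (\<lambda>k. {..<n} - {k})"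
    by auto
  then show ?thesis
    by simp
qed

lemma prob_good_pair_le:
  assumes range: "\<And>x. x \<ge> 0 \<Longrightarrow> 0 \<le> H x \<and> H x \<le> 1" and R: "0 < RL H \<tau> L"
    and disj: "seg m i \<inter> seg m j = {}"
  shows "measure_pmf.prob (edge_pmf H \<tau> \<alpha> L n x) {e. good m n x e i \<and> good m n x e j}
    \<le> (\<Sum>(k, l)\<in>{(k, l). k < n \<and> l < n \<and> k \<noteq> l}. indicator (seg m i) (x k) * indicator (seg m j) (x l)
          * (\<Prod>z\<in>{..<n} - {k, l}. nonadj_both H \<tau> \<alpha> L (x k) (x l) (x z)))"
proof -
  let ?P = "measure_pmf.prob (edge_pmf H \<tau> \<alpha> L n x)"
  let ?D = "{(k, l). k < n \<and> l < n \<and> k \<noteq> l}"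
  define S where "S = {(k, l). k < n \<and> l < n \<and> k \<noteq> l \<and> x k \<in> seg m i \<and> x l \<in> seg m j}"
  have fin: "finite ?D"
    by (rule finite_subset[of _ "{..<n} \<times> {..<n}"]) auto
  have fin_S: "finite S"
    unfolding S_def by (rule finite_subset[OF _ fin]) auto
  have "?P {e. good m n x e i \<and> good m n x e j} \<le> ?P (\<Union>(k, l)\<in>S. pair_isolated n k l)"
    unfolding S_def using disj by (intro measure_pmf.finite_measure_mono good_pair_subset) auto
  also have "\<dots> \<le> (\<Sum>(k, l)\<in>S. ?P (pair_isolated n k l))"
    using measure_pmf.finite_measure_subadditive_finite[OF fin_S, of "\<lambda>p. pair_isolated n (fst p) (snd p)"]
    by (simp add: case_prod_unfold)
  also have "\<dots> \<le> (\<Sum>(k, l)\<in>S. \<Prod>z\<in>{..<n} - {k, l}. nonadj_both H \<tau> \<alpha> L (x k) (x l) (x z))"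
  proof (intro sum_mono, clarify)
    fix k l assume "(k, l) \<in> S"
    then have kl: "k < n" "l < n" "k \<noteq> l"
      by (auto simp: S_def)
    have "?P (pair_isolated n k l) = (\<Prod>z\<in>{..<n} - {k, l}. pmf (bernoulli_pmf (htilde H \<tau> \<alpha> L (x k) (x z))) False
        * pmf (bernoulli_pmf (htilde H \<tau> \<alpha> L (x l) (x z))) False)"
      unfolding edge_pmf_def using kl
      by (intro prob_pair_isolated[where p = "\<lambda>a b. htilde H \<tau> \<alpha> L (x a) (x b)"]) (auto intro: htilde_commute)
    also have "\<dots> \<le> (\<Prod>z\<in>{..<n} - {k, l}. nonadj_both H \<tau> \<alpha> L (x k) (x l) (x z))"
      unfolding nonadj_both_def
      by (intro prod_mono conjI mult_mono pmf_bernoulli_htilde_False_le[OF range R])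
        (auto simp: conn_range[OF range])
    finally show "?P (pair_isolated n k l) \<le> (\<Prod>z\<in>{..<n} - {k, l}. nonadj_both H \<tau> \<alpha> L (x k) (x l) (x z))" .
  qed
  also have "\<dots> = (\<Sum>(k, l)\<in>?D. indicator (seg m i) (x k) * indicator (seg m j) (x l)
          * (\<Prod>z\<in>{..<n} - {k, l}. nonadj_both H \<tau> \<alpha> L (x k) (x l) (x z)))"
    using fin by (intro sum.mono_neutral_cong_left) (auto simp: S_def indicator_def)
  finally show ?thesis .
qed

lemma borel_measurable_pair_term:
  assumes meas: "set_borel_measurable lborel {0..} H" and kl: "k < n" "l < n"
  shows "(\<lambda>x. ennreal (indicator (seg m i) (x k) * indicator (seg m j) (x l)
            * (\<Prod>z\<in>{..<n} - {k, l}. nonadj_both H \<tau> \<alpha> L (x k) (x l) (x z))))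
    \<in> borel_measurable (PiM {..<n} (\<lambda>_. uniform_measure lborel A))"
proof -
  have comp: "(\<lambda>x. x z) \<in> borel_measurable (PiM {..<n} (\<lambda>_. uniform_measure lborel A))" if "z < n" for z
    using measurable_component_singleton[of z "{..<n}" "\<lambda>_. uniform_measure lborel A"] that
    by (simp cong: measurable_cong_sets)
  have "(\<lambda>x. \<Prod>z\<in>{..<n} - {k, l}. nonadj_both H \<tau> \<alpha> L (x k) (x l) (x z))
      \<in> borel_measurable (PiM {..<n} (\<lambda>_. uniform_measure lborel A))"
    using kl by (intro borel_measurable_prod borel_measurable_nonadj_both[OF meas] comp) auto
  then show ?thesis
    using kl comp by (intro measurable_compose[OF _ measurable_ennreal]) (measurable, auto simp: seg_def)
qed

lemma measurable_nonadj_both_uniform: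
  fixes A :: "real set"
  assumes "set_borel_measurable lborel {0..} H"
  defines "U \<equiv> uniform_measure lborel A"
  shows "(\<lambda>(a, b, t). ennreal (nonadj_both H \<tau> \<alpha> L a b t)) \<in> borel_measurable (U \<Otimes>\<^sub>M U \<Otimes>\<^sub>M U)"
proof -
  have "sets (U \<Otimes>\<^sub>M U \<Otimes>\<^sub>M U) = sets (borel \<Otimes>\<^sub>M borel \<Otimes>\<^sub>M borel)"
    unfolding U_def by (intro sets_pair_measure_cong) auto
  then show ?thesis
    using assms(1) by (subst measurable_cong_sets[OF _ refl]) (auto simp: case_prod_beta)
qed

lemma nn_integral_pair_term_le:
  assumes meas: "set_borel_measurable lborel {0..} H"
    and range: "\<And>x. x \<ge> 0 \<Longrightarrow> 0 \<le> H x \<and> H x \<le> 1"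
    and L: "0 < L" and m: "0 < m" and ij: "i \<in> Gamma m L" "j \<in> Gamma m L" and kl: "k < n" "l < n" "k \<noteq> l"
    and Q: "\<And>a b. a \<in> seg m i \<Longrightarrow> b \<in> seg m j \<Longrightarrow>
              (\<integral>\<^sup>+t. ennreal (nonadj_both H \<tau> \<alpha> L a b t) \<partial>uniform_measure lborel {0..<real L}) \<le> ennreal Q"
      "0 \<le> Q"
  defines "U \<equiv> uniform_measure lborel {0..<real L}"
  shows "(\<integral>\<^sup>+x. ennreal (indicator (seg m i) (x k) * indicator (seg m j) (x l)
            * (\<Prod>z\<in>{..<n} - {k, l}. nonadj_both H \<tau> \<alpha> L (x k) (x l) (x z))) \<partial>PiM {..<n} (\<lambda>_. U))
    \<le> ennreal (Q ^ (n - 2) / (real m * real L)\<^sup>2)"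
proof -
  define u where "u = 1 / (real m * real L)"
  have "0 \<le> u"
    by (simp add: u_def)
  have "(\<integral>\<^sup>+x. ennreal (indicator (seg m i) (x k) * indicator (seg m j) (x l)
            * (\<Prod>z\<in>{..<n} - {k, l}. nonadj_both H \<tau> \<alpha> L (x k) (x l) (x z))) \<partial>PiM {..<n} (\<lambda>_. U))
    = (\<integral>\<^sup>+x. indicator (seg m i) (x k) * indicator (seg m j) (x l)
          * (\<Prod>z\<in>{..<n} - {k, l}. ennreal (nonadj_both H \<tau> \<alpha> L (x k) (x l) (x z))) \<partial>PiM {..<n} (\<lambda>_. U))"
    by (intro nn_integral_cong)
      (simp add: ennreal_mult' prod_nonneg nonadj_both_nonneg[OF range] prod_ennreal split: split_indicator)
  also have "\<dots> \<le> emeasure U (seg m i) * emeasure U (seg m j) * ennreal Q ^ (n - 2)"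
    using kl Q unfolding U_def
    by (intro nn_integral_PiM_pair_prod_le prob_space_uniform_measure measurable_nonadj_both_uniform meas)
      (auto simp: seg_def L)
  also have "\<dots> = ennreal u * ennreal u * ennreal (Q ^ (n - 2))"
    using emeasure_uniform_seg[OF m L] ij Q(2) by (simp add: U_def u_def ennreal_power)
  also have "\<dots> = ennreal (u\<^sup>2 * Q ^ (n - 2))"
    using Q(2) \<open>0 \<le> u\<close> by (simp add: ennreal_mult power2_eq_square)
  also have "u\<^sup>2 * Q ^ (n - 2) = Q ^ (n - 2) / (real m * real L)\<^sup>2"
    by (simp add: u_def power_divide)
  finally show ?thesis .
qed

lemma integral_prob_good_pair_le:
  assumes meas: "set_borel_measurable lborel {0..} H"
    and range: "\<And>x. x \<ge> 0 \<Longrightarrow> 0 \<le> H x \<and> H x \<le> 1"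
    and L: "0 < L" and R: "0 < RL H \<tau> L" and m: "0 < m"
    and ij: "i \<in> Gamma m L" "j \<in> Gamma m L" "i \<noteq> j"
    and Q: "\<And>a b. a \<in> seg m i \<Longrightarrow> b \<in> seg m j \<Longrightarrow>
              (\<integral>\<^sup>+t. ennreal (nonadj_both H \<tau> \<alpha> L a b t) \<partial>uniform_measure lborel {0..<real L}) \<le> ennreal Q"
      "0 \<le> Q"
  defines "U \<equiv> uniform_measure lborel {0..<real L}"
  shows "(\<integral>x. measure_pmf.prob (edge_pmf H \<tau> \<alpha> L n x) {e. good m n x e i \<and> good m n x e j}
           \<partial>PiM {..<n} (\<lambda>_. U))
    \<le> real n * (real n - 1) * Q ^ (n - 2) / (real m * real L)\<^sup>2"
proof -
  let ?D = "{(k, l). k < n \<and> l < n \<and> k \<noteq> l}"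
  define f where "f k l x = indicator (seg m i) (x k) * indicator (seg m j) (x l)
    * (\<Prod>z\<in>{..<n} - {k, l}. nonadj_both H \<tau> \<alpha> L (x k) (x l) (x z))" for k l and x :: "nat \<Rightarrow> real"
  define X where "X = Q ^ (n - 2) / (real m * real L)\<^sup>2"
  have X_nonneg: "0 \<le> X"
    using Q(2) by (simp add: X_def)
  have f_nonneg: "0 \<le> f k l x" for k l x
    by (simp add: f_def prod_nonneg nonadj_both_nonneg[OF range])
  have "(\<integral>\<^sup>+x. ennreal (measure_pmf.prob (edge_pmf H \<tau> \<alpha> L n x) {e. good m n x e i \<and> good m n x e j})
           \<partial>PiM {..<n} (\<lambda>_. U))
      \<le> (\<integral>\<^sup>+x. (\<Sum>(k, l)\<in>?D. ennreal (f k l x)) \<partial>PiM {..<n} (\<lambda>_. U))"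
    using prob_good_pair_le[OF range R seg_disjoint[OF ij(3)]] f_nonneg
    by (intro nn_integral_mono) (simp add: f_def case_prod_beta sum_ennreal ennreal_leI)
  also have "\<dots> = (\<Sum>(k, l)\<in>?D. \<integral>\<^sup>+x. ennreal (f k l x) \<partial>PiM {..<n} (\<lambda>_. U))"
    unfolding f_def U_def using meas by (subst nn_integral_sum) (auto simp: case_prod_beta intro: borel_measurable_pair_term)
  also have "\<dots> \<le> (\<Sum>(k, l)\<in>?D. ennreal X)"
    unfolding f_def U_def X_def using meas range L m ij Q by (intro sum_mono) (auto intro: nn_integral_pair_term_le)
  also have "\<dots> = ennreal (real (n * (n - 1)) * X)"
    using X_nonneg by (simp add: card_offdiag ennreal_mult ennreal_of_nat_eq_real_of_nat)
  also have "real (n * (n - 1)) * X = real n * (real n - 1) * Q ^ (n - 2) / (real m * real L)\<^sup>2"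
    by (cases n) (simp_all add: X_def algebra_simps)
  finally show ?thesis
  proof (rule integral_real_bounded[rotated])
    have "0 \<le> real n * (real n - 1)"
      by (cases n) auto
    then show "0 \<le> real n * (real n - 1) * Q ^ (n - 2) / (real m * real L)\<^sup>2"
      using Q(2) by simp
  qed
qed

lemma pij_bounds:
  assumes meas: "set_borel_measurable lborel {0..} H"
    and range: "\<And>x. x \<ge> 0 \<Longrightarrow> 0 \<le> H x \<and> H x \<le> 1"
    and int1: "set_integrable lborel {0..} H"
    and L: "0 < L" and R: "0 < RL H \<tau> L" and T: "2 * cutoff H \<tau> \<alpha> L \<le> real L" and m: "0 < m"
    and ij: "i \<in> Gamma m L" "j \<in> Gamma m L" "i \<noteq> j"
  defines "\<Phi> \<equiv> pair_isolation_integral H (cutoff H \<tau> \<alpha> L / RL H \<tau> L)"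
  shows "0 \<le> pij H \<tau> \<alpha> m L i j"
    and "pij H \<tau> \<alpha> m L i j \<le> exp (- (4 * RL H \<tau> L * \<Phi>)) / (real m)\<^sup>2"
proof -
  define Q where "Q = 1 - 4 * RL H \<tau> L * \<Phi> / real L"
  define F where "F n = (\<integral>x. measure_pmf.prob (edge_pmf H \<tau> \<alpha> L n x) {e. good m n x e i \<and> good m n x e j}
    \<partial>PiM {..<n} (\<lambda>_. uniform_measure lborel {0..<real L}))" for n
  define bound where "bound n = pmf (poisson_pmf (real L)) n * (real n * (real n - 1) * Q ^ (n - 2))
    / (real m * real L)\<^sup>2" for n
  have Q: "0 \<le> Q"
    using nn_integral_nonadj_both_le(2)[OF meas range int1 L R T, of 0 0] L by (simp add: Q_def \<Phi>_def)
  have F_le: "pmf (poisson_pmf (real L)) n * F n \<le> bound n" for n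
  proof -
    have "F n \<le> real n * (real n - 1) * Q ^ (n - 2) / (real m * real L)\<^sup>2"
      unfolding F_def
    proof (rule integral_prob_good_pair_le[OF meas range L R m ij _ Q])
      fix a b assume "a \<in> seg m i" "b \<in> seg m j"
      then have ab: "a \<in> {0..<real L}" "b \<in> {0..<real L}"
        using seg_subset[OF m ij(1)] seg_subset[OF m ij(2)] by blast+
      show "(\<integral>\<^sup>+t. ennreal (nonadj_both H \<tau> \<alpha> L a b t) \<partial>uniform_measure lborel {0..<real L}) \<le> ennreal Q"
        using nn_integral_nonadj_both_le(1)[OF meas range int1 L R T ab] by (simp add: Q_def \<Phi>_def)
    qed
    then show ?thesis
      unfolding bound_def times_divide_eq_right[symmetric] by (intro mult_left_mono) auto
  qed
  have F_nonneg: "0 \<le> pmf (poisson_pmf (real L)) n * F n" for n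
    by (simp add: F_def)
  have "bound sums ((real L)\<^sup>2 * exp (real L * (Q - 1)) / (real m * real L)\<^sup>2)"
    unfolding bound_def using L by (intro sums_divide poisson_pmf_factorial_moment_sums) simp
  also have "(real L)\<^sup>2 * exp (real L * (Q - 1)) / (real m * real L)\<^sup>2 = exp (- (4 * RL H \<tau> L * \<Phi>)) / (real m)\<^sup>2"
    using L by (simp add: Q_def power_mult_distrib field_simps)
  finally have bound: "bound sums (exp (- (4 * RL H \<tau> L * \<Phi>)) / (real m)\<^sup>2)" .
  have summable: "summable (\<lambda>n. pmf (poisson_pmf (real L)) n * F n)"
    by (rule summable_comparison_test'[OF sums_summable[OF bound]]) (use F_le F_nonneg in simp)
  have pij_eq: "pij H \<tau> \<alpha> m L i j = (\<Sum>n. pmf (poisson_pmf (real L)) n * F n)"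
    by (simp add: pij_def F_def)
  show "0 \<le> pij H \<tau> \<alpha> m L i j"
    unfolding pij_eq using summable F_nonneg by (rule suminf_nonneg)
  show "pij H \<tau> \<alpha> m L i j \<le> exp (- (4 * RL H \<tau> L * \<Phi>)) / (real m)\<^sup>2"
    unfolding pij_eq using F_le summable_sums[OF summable] bound by (rule sums_le)
qed

section \<open>The sum b2 and its limit\<close>

lemma circular_nbhd_subset_image:
  fixes N i :: nat and r :: real
  assumes i: "i \<in> {1..N}"
  shows "{j \<in> {1..N}. min \<bar>real i - real j\<bar> (real N - \<bar>real i - real j\<bar>) \<le> r}
    \<subseteq> (\<lambda>d. nat ((int i - 1 + d) mod int N) + 1) ` {-\<lfloor>r\<rfloor>..\<lfloor>r\<rfloor>}"
proof
  fix j assume "j \<in> {j \<in> {1..N}. min \<bar>real i - real j\<bar> (real N - \<bar>real i - real j\<bar>) \<le> r}"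
  then have j: "1 \<le> j" "j \<le> N" and near: "min \<bar>real i - real j\<bar> (real N - \<bar>real i - real j\<bar>) \<le> r"
    by auto
  obtain c :: int where c: "\<bar>real_of_int (int j - int i + c * int N)\<bar> \<le> r"
  proof (cases "\<bar>real i - real j\<bar> \<le> r")
    case True
    then show ?thesis
      by (intro that[of 0]) simp
  next
    case False
    then show ?thesis
      using near i j by (intro that[of "if i < j then -1 else 1"]) (auto simp: min_def abs_if split: if_splits)
  qed
  have "(int i - 1 + (int j - int i + c * int N)) mod int N = (int j - 1 + c * int N) mod int N"
    by (simp add: algebra_simps)
  also have "\<dots> = int j - 1"
    using j by (simp only: mod_mult_self1) (intro mod_pos_pos_trivial, auto)
  finally have "nat ((int i - 1 + (int j - int i + c * int N)) mod int N) + 1 = j"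
    using j by simp
  moreover have "\<bar>int j - int i + c * int N\<bar> \<le> \<lfloor>r\<rfloor>"
    using c by (simp add: le_floor_iff)
  ultimately show "j \<in> (\<lambda>d. nat ((int i - 1 + d) mod int N) + 1) ` {-\<lfloor>r\<rfloor>..\<lfloor>r\<rfloor>}"
    by (intro image_eqI[of _ _ "int j - int i + c * int N"]) auto
qed

lemma card_circular_nbhd_le:
  fixes N i :: nat and r :: real
  assumes i: "i \<in> {1..N}" and r: "0 \<le> r"
  shows "real (card {j \<in> {1..N}. min \<bar>real i - real j\<bar> (real N - \<bar>real i - real j\<bar>) \<le> r}) \<le> 2 * r + 1"
proof -
  have "card {j \<in> {1..N}. min \<bar>real i - real j\<bar> (real N - \<bar>real i - real j\<bar>) \<le> r}
      \<le> card ((\<lambda>d. nat ((int i - 1 + d) mod int N) + 1) ` {-\<lfloor>r\<rfloor>..\<lfloor>r\<rfloor>})"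
    using circular_nbhd_subset_image[OF i] by (intro card_mono) auto
  also have "\<dots> \<le> card {-\<lfloor>r\<rfloor>..\<lfloor>r\<rfloor>}"
    by (rule card_image_le) simp
  finally have "real (card {j \<in> {1..N}. min \<bar>real i - real j\<bar> (real N - \<bar>real i - real j\<bar>) \<le> r})
      \<le> real (card {-\<lfloor>r\<rfloor>..\<lfloor>r\<rfloor>})"
    by simp
  also have "\<dots> \<le> 2 * r + 1"
    using r by simp
  finally show ?thesis .
qed

lemma card_Bset_le:
  assumes m: "0 < m" and i: "i \<in> Gamma m L"
  shows "real (card (Bset H \<tau> \<alpha> m L i)) \<le> 6 * cutoff H \<tau> \<alpha> L * real m + 1"
proof -
  define r where "r = 3 * cutoff H \<tau> \<alpha> L * real m"
  have "rhoL (real L) (centre m i) (centre m j)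
      = min \<bar>real i - real j\<bar> (real (m * L) - \<bar>real i - real j\<bar>) / real m" for j
  proof -
    have "\<bar>centre m i - centre m j\<bar> = \<bar>real i - real j\<bar> / real m"
      by (simp add: centre_def abs_divide flip: diff_divide_distrib)
    moreover have "real L - \<bar>real i - real j\<bar> / real m = (real (m * L) - \<bar>real i - real j\<bar>) / real m"
      using m by (simp add: field_simps)
    ultimately show ?thesis
      using m by (simp add: rhoL_def min_divide_distrib_right)
  qed
  then have "Bset H \<tau> \<alpha> m L i = {j \<in> {1..m * L}. min \<bar>real i - real j\<bar> (real (m * L) - \<bar>real i - real j\<bar>) \<le> r}"
    using m by (auto simp: Bset_def Gamma_def r_def divide_le_eq mult.commute)
  then show ?thesis
    using card_circular_nbhd_le[of i "m * L" r] i by (simp add: Gamma_def r_def)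
qed

lemma b2_bounds:
  assumes meas: "set_borel_measurable lborel {0..} H"
    and range: "\<And>x. x \<ge> 0 \<Longrightarrow> 0 \<le> H x \<and> H x \<le> 1"
    and int1: "set_integrable lborel {0..} H"
    and L: "0 < L" and R: "0 < RL H \<tau> L" and T: "2 * cutoff H \<tau> \<alpha> L \<le> real L" and m: "0 < m"
  defines "E \<equiv> exp (- (4 * RL H \<tau> L * pair_isolation_integral H (cutoff H \<tau> \<alpha> L / RL H \<tau> L)))"
  shows "0 \<le> b2 H \<tau> \<alpha> m L"
    and "b2 H \<tau> \<alpha> m L \<le> real L * (6 * cutoff H \<tau> \<alpha> L + 1) * E"
proof -
  have B_sub: "Bset H \<tau> \<alpha> m L i \<subseteq> Gamma m L" for i
    by (auto simp: Bset_def)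
  have E_nonneg: "0 \<le> E"
    by (simp add: E_def)
  note p = pij_bounds[OF meas range int1 L R T m, folded E_def]
  show "0 \<le> b2 H \<tau> \<alpha> m L"
    unfolding b2_def using B_sub by (intro sum_nonneg p(1)) auto
  have "b2 H \<tau> \<alpha> m L \<le> (\<Sum>i\<in>Gamma m L. \<Sum>j\<in>Bset H \<tau> \<alpha> m L i - {i}. E / (real m)\<^sup>2)"
    unfolding b2_def using B_sub by (intro sum_mono p(2)) auto
  also have "\<dots> \<le> (\<Sum>i\<in>Gamma m L. (6 * cutoff H \<tau> \<alpha> L * real m + 1) * (E / (real m)\<^sup>2))"
  proof (intro sum_mono)
    fix i assume "i \<in> Gamma m L"
    then have "real (card (Bset H \<tau> \<alpha> m L i - {i})) \<le> 6 * cutoff H \<tau> \<alpha> L * real m + 1"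
      using card_Bset_le[OF m] card_Diff1_le[of "Bset H \<tau> \<alpha> m L i" i] by (meson of_nat_le_iff order_trans)
    then show "(\<Sum>j\<in>Bset H \<tau> \<alpha> m L i - {i}. E / (real m)\<^sup>2) \<le> (6 * cutoff H \<tau> \<alpha> L * real m + 1) * (E / (real m)\<^sup>2)"
      using mult_right_mono[OF _ divide_nonneg_nonneg[OF E_nonneg zero_le_power2]] by simp
  qed
  also have "\<dots> = real L * (6 * cutoff H \<tau> \<alpha> L + 1 / real m) * E"
    using m by (simp add: Gamma_def power2_eq_square field_simps)
  also have "\<dots> \<le> real L * (6 * cutoff H \<tau> \<alpha> L + 1) * E"
    using m E_nonneg by (intro mult_right_mono mult_left_mono) auto
  finally show "b2 H \<tau> \<alpha> m L \<le> real L * (6 * cutoff H \<tau> \<alpha> L + 1) * E" .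
qed

lemma exp_pair_isolation_le:
  assumes N1: "0 < norm1 H" and L: "1 < \<tau> * real L"
    and \<Phi>: "(1 + \<kappa>) * norm1 H / 2 < pair_isolation_integral H (RL H \<tau> L powr (1 / \<alpha>))"
  shows "0 < RL H \<tau> L"
    and "exp (- (4 * RL H \<tau> L * pair_isolation_integral H (cutoff H \<tau> \<alpha> L / RL H \<tau> L)))
      \<le> (\<tau> * real L) powr - (1 + \<kappa>)"
proof -
  define R where "R = RL H \<tau> L"
  show R: "0 < RL H \<tau> L"
    using L N1 by (simp add: RL_def)
  have "ln (\<tau> * real L) = 2 * R * norm1 H"
    using N1 by (simp add: R_def RL_def)
  then have "(1 + \<kappa>) * ln (\<tau> * real L) = 4 * R * ((1 + \<kappa>) * norm1 H / 2)"
    by simp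
  also have "\<dots> \<le> 4 * R * pair_isolation_integral H (cutoff H \<tau> \<alpha> L / R)"
    using \<Phi> R by (intro mult_left_mono) (auto simp: R_def powr_add)
  finally have "exp (- (4 * R * pair_isolation_integral H (cutoff H \<tau> \<alpha> L / R)))
      \<le> exp (- ((1 + \<kappa>) * ln (\<tau> * real L)))"
    by simp
  also have "\<dots> = (\<tau> * real L) powr - (1 + \<kappa>)"
    using L by (cases L) (auto simp: powr_def algebra_simps)
  finally show "exp (- (4 * RL H \<tau> L * pair_isolation_integral H (cutoff H \<tau> \<alpha> L / RL H \<tau> L)))
      \<le> (\<tau> * real L) powr - (1 + \<kappa>)"
    by (simp add: R_def)
qed

lemma b2_le_powr:
  assumes meas: "set_borel_measurable lborel {0..} H"
    and range: "\<And>x. x \<ge> 0 \<Longrightarrow> 0 \<le> H x \<and> H x \<le> 1"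
    and int1: "set_integrable lborel {0..} H" and N1: "0 < norm1 H"
    and \<tau>L: "1 < \<tau> * real L" and T: "2 * cutoff H \<tau> \<alpha> L \<le> real L" and m: "0 < m"
    and \<Phi>: "(1 + \<kappa>) * norm1 H / 2 < pair_isolation_integral H (RL H \<tau> L powr (1 / \<alpha>))"
  shows "0 \<le> b2 H \<tau> \<alpha> m L
    \<and> b2 H \<tau> \<alpha> m L \<le> real L * (6 * cutoff H \<tau> \<alpha> L + 1) * (\<tau> * real L) powr - (1 + \<kappa>)"
proof -
  have L: "0 < L"
    using \<tau>L by (cases L) auto
  note R = exp_pair_isolation_le(1)[OF N1 \<tau>L \<Phi>]
  have "b2 H \<tau> \<alpha> m L \<le> real L * (6 * cutoff H \<tau> \<alpha> L + 1)
      * exp (- (4 * RL H \<tau> L * pair_isolation_integral H (cutoff H \<tau> \<alpha> L / RL H \<tau> L)))"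
    using meas range int1 L R T m by (rule b2_bounds(2))
  also have "\<dots> \<le> real L * (6 * cutoff H \<tau> \<alpha> L + 1) * (\<tau> * real L) powr - (1 + \<kappa>)"
    using exp_pair_isolation_le(2)[OF N1 \<tau>L \<Phi>] by (intro mult_left_mono) auto
  finally show ?thesis
    using meas range int1 L R T m b2_bounds(1) by blast
qed

lemma eventually_b2_le:
  assumes meas: "set_borel_measurable lborel {0..} H"
    and range: "\<And>x. x \<ge> 0 \<Longrightarrow> 0 \<le> H x \<and> H x \<le> 1"
    and int1: "set_integrable lborel {0..} H"
    and N1: "0 < norm1 H" and \<kappa>: "(1 + \<kappa>) * norm1 H < 2 * norm1 H - norm2sq H"
    and tau: "0 < \<tau>" and alpha: "0 < \<alpha>"
  shows "\<forall>\<^sub>F L in sequentially. \<forall>\<^sub>F m in sequentially. 0 \<le> b2 H \<tau> \<alpha> m L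
           \<and> b2 H \<tau> \<alpha> m L \<le> real L * (6 * cutoff H \<tau> \<alpha> L + 1) * (\<tau> * real L) powr - (1 + \<kappa>)"
proof -
  define c where "c = 2 * norm1 H"
  have c: "0 < c" and RL_eq: "RL H \<tau> L = ln (\<tau> * real L) / c" for L
    using N1 by (simp_all add: c_def RL_def)
  have "filterlim (\<lambda>L. RL H \<tau> L powr (1 / \<alpha>)) at_top sequentially"
    unfolding RL_eq using tau c alpha by real_asymp
  moreover have "(pair_isolation_integral H \<longlongrightarrow> norm1 H - norm2sq H / 2) at_top"
    using range int1 by (rule pair_isolation_integral_tendsto)
  ultimately have "((\<lambda>L. pair_isolation_integral H (RL H \<tau> L powr (1 / \<alpha>))) \<longlongrightarrow> norm1 H - norm2sq H / 2)
      sequentially"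
    by (rule filterlim_compose[rotated])
  then have "\<forall>\<^sub>F L in sequentially. (1 + \<kappa>) * norm1 H / 2 < pair_isolation_integral H (RL H \<tau> L powr (1 / \<alpha>))"
    by (rule order_tendstoD(1)) (use \<kappa> in linarith)
  moreover have "\<forall>\<^sub>F L in sequentially. 1 < \<tau> * real L"
    using tau by real_asymp
  moreover have "\<forall>\<^sub>F L in sequentially. 2 * cutoff H \<tau> \<alpha> L \<le> real L"
    unfolding RL_eq using tau c alpha by real_asymp
  ultimately show ?thesis
  proof eventually_elim
    case (elim L)
    have "0 \<le> b2 H \<tau> \<alpha> m L
        \<and> b2 H \<tau> \<alpha> m L \<le> real L * (6 * cutoff H \<tau> \<alpha> L + 1) * (\<tau> * real L) powr - (1 + \<kappa>)"
      if "0 < m" for m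
      using meas range int1 N1 elim(2,3) that elim(1) by (rule b2_le_powr)
    then show ?case
      by (rule eventually_mono[OF eventually_gt_at_top[of 0]])
  qed
qed

lemma tendsto_limsup_zero_of_bounds:
  fixes f :: "'a \<Rightarrow> nat \<Rightarrow> real"
  assumes bounds: "\<forall>\<^sub>F L in F. \<forall>\<^sub>F m in sequentially. 0 \<le> f L m \<and> f L m \<le> B L"
    and B: "(B \<longlongrightarrow> 0) F"
  shows "((\<lambda>L. limsup (\<lambda>m. ereal (f L m))) \<longlongrightarrow> 0) F"
proof (rule tendsto_sandwich[OF _ _ tendsto_const])
  show "\<forall>\<^sub>F L in F. 0 \<le> limsup (\<lambda>m. ereal (f L m))"
    using bounds by eventually_elim (auto intro!: le_Limsup elim: eventually_mono)
  show "\<forall>\<^sub>F L in F. limsup (\<lambda>m. ereal (f L m)) \<le> ereal (B L)"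
    using bounds by eventually_elim (auto intro!: Limsup_bounded elim: eventually_mono)
  show "((\<lambda>L. ereal (B L)) \<longlongrightarrow> 0) F"
    using tendsto_ereal[OF B] by (simp add: zero_ereal_def)
qed

theorem lemma6:
  fixes H :: "real \<Rightarrow> real" and \<tau> \<alpha> :: real
  assumes meas: "set_borel_measurable lborel {0..} H"
    and range: "\<And>x. x \<ge> 0 \<Longrightarrow> 0 \<le> H x \<and> H x \<le> 1"
    and int1: "set_integrable lborel {0..} H"
    and norm2: "norm2sq H < norm1 H"
    and tau: "\<tau> > 0" and alpha: "\<alpha> > 0"
  shows "((\<lambda>L. limsup (\<lambda>m. ereal (b2 H \<tau> \<alpha> m L))) \<longlongrightarrow> 0) sequentially"
proof -
  define \<kappa> where "\<kappa> = (norm1 H - norm2sq H) / (2 * norm1 H)"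
  have "0 \<le> norm2sq H"
    unfolding norm2sq_def set_lebesgue_integral_def by (intro integral_nonneg_AE AE_I2) simp
  then have N1: "0 < norm1 H"
    using norm2 by linarith
  then have \<kappa>: "0 < \<kappa>" "(1 + \<kappa>) * norm1 H < 2 * norm1 H - norm2sq H"
    using norm2 by (simp_all add: \<kappa>_def field_simps)
  have "\<forall>\<^sub>F L in sequentially. \<forall>\<^sub>F m in sequentially. 0 \<le> b2 H \<tau> \<alpha> m L
           \<and> b2 H \<tau> \<alpha> m L \<le> real L * (6 * cutoff H \<tau> \<alpha> L + 1) * (\<tau> * real L) powr - (1 + \<kappa>)"
    using meas range int1 N1 \<kappa>(2) tau alpha by (rule eventually_b2_le)
  moreover have "((\<lambda>L. real L * (6 * cutoff H \<tau> \<alpha> L + 1) * (\<tau> * real L) powr - (1 + \<kappa>)) \<longlongrightarrow> 0) sequentially"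
  proof -
    define c where "c = 2 * norm1 H"
    have "RL H \<tau> L = ln (\<tau> * real L) / c" for L
      by (simp add: c_def RL_def)
    moreover have "0 < c"
      using N1 by (simp add: c_def)
    ultimately show ?thesis
      using tau alpha \<kappa>(1) by (simp only:) real_asymp
  qed
  ultimately show ?thesis
    by (rule tendsto_limsup_zero_of_bounds)
qed

end
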